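(* For every integer $m\geq 2$ and every integer $n\geq 2$, the graph $mL_n$ (the disjoint union of $m$ copies of the ladder $L_n$) is $C_4$-supermagic.
   Context: All graphs are finite and simple. For a graph $H$, a graph $G=(V,E)$ has an $H$-covering if every edge of $G$ belongs to a subgraph of $G$ isomorphic to $H$. For such $G$, an $H$-magic labeling is a bijection $\lambda: V\cup E\to\{1,2,\dots,|V|+|E|\}$ for which there is a constant $c$ such that for every subgraph $H'=(V',E')$ of $G$ isomorphic to $H$, $\sum_{v\in V'}\lambda(v)+\sum_{e\in E'}\lambda(e)=c$. It is $H$-supermagic if moreover $\{\lambda(v):v\in V\}=\{1,\dots,|V|\}$; $G$ is $H$-supermagic if it admits such a labeling. $C_k$ is the cycle of length $k$. $mG$ denotes the disjoint union of $m$ copies of $G$. The ladder $L_n=P_n\times P_2$ ($n\ge2$) has vertices $u_i,v_i$ ($1\le i\le n$) and edges $u_iv_i$ ($1\le i\le n$), $u_iu_{i+1}$ and $v_iv_{i+1}$ ($1\le i\le n-1$). *)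

theory Defs
  imports Main
begin

type_synonym 'a graph = "'a set \<times> 'a set set"

definition verts :: "'a graph \<Rightarrow> 'a set" where "verts G = fst G"
definition edges :: "'a graph \<Rightarrow> 'a set set" where "edges G = snd G"

definition simple_graph :: "'a graph \<Rightarrow> bool" where
  "simple_graph G \<longleftrightarrow> finite (verts G) \<and>
     (\<forall>e\<in>edges G. \<exists>x y. x \<in> verts G \<and> y \<in> verts G \<and> x \<noteq> y \<and> e = {x, y})"

definition graph_iso :: "'a graph \<Rightarrow> 'b graph \<Rightarrow> bool" where
  "graph_iso G H \<longleftrightarrow> (\<exists>f. bij_betw f (verts G) (verts H) \<and>
     (\<forall>x\<in>verts G. \<forall>y\<in>verts G. {x, y} \<in> edges G \<longleftrightarrow> {f x, f y} \<in> edges H))"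

definition is_subgraph :: "'a graph \<Rightarrow> 'a graph \<Rightarrow> bool" where
  "is_subgraph G' G \<longleftrightarrow> verts G' \<subseteq> verts G \<and> edges G' \<subseteq> edges G \<and>
     (\<forall>e\<in>edges G'. e \<subseteq> verts G')"

definition H_subgraphs :: "'b graph \<Rightarrow> 'a graph \<Rightarrow> 'a graph set" where
  "H_subgraphs H G = {G'. is_subgraph G' G \<and> graph_iso G' H}"

definition H_covering :: "'b graph \<Rightarrow> 'a graph \<Rightarrow> bool" where
  "H_covering H G \<longleftrightarrow> (\<forall>e\<in>edges G. \<exists>G'\<in>H_subgraphs H G. e \<in> edges G')"

text \<open>A total labeling assigns labels to vertices (Inl v) and edges (Inr e).\<close>
definition weight :: "('a + 'a set \<Rightarrow> nat) \<Rightarrow> 'a graph \<Rightarrow> nat" where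
  "weight lam G' = (\<Sum>v\<in>verts G'. lam (Inl v)) + (\<Sum>e\<in>edges G'. lam (Inr e))"

definition H_magic_labeling :: "'b graph \<Rightarrow> 'a graph \<Rightarrow> ('a + 'a set \<Rightarrow> nat) \<Rightarrow> bool" where
  "H_magic_labeling H G lam \<longleftrightarrow>
     bij_betw lam (Inl ` verts G \<union> Inr ` edges G) {1..card (verts G) + card (edges G)} \<and>
     (\<exists>c. \<forall>G'\<in>H_subgraphs H G. weight lam G' = c)"

definition H_supermagic_labeling :: "'b graph \<Rightarrow> 'a graph \<Rightarrow> ('a + 'a set \<Rightarrow> nat) \<Rightarrow> bool" where
  "H_supermagic_labeling H G lam \<longleftrightarrow> H_magic_labeling H G lam \<and>
     (\<lambda>v. lam (Inl v)) ` verts G = {1..card (verts G)}"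

definition H_supermagic :: "'b graph \<Rightarrow> 'a graph \<Rightarrow> bool" where
  "H_supermagic H G \<longleftrightarrow> simple_graph G \<and> H_covering H G \<and> (\<exists>lam. H_supermagic_labeling H G lam)"

definition cycle_graph :: "nat \<Rightarrow> nat graph" where
  "cycle_graph k = ({0..<k}, {{i, (i + 1) mod k} | i. i < k})"

text \<open>The ladder L_n: u_i = (i, False), v_i = (i, True), 1 \<le> i \<le> n.\<close>
definition ladder :: "nat \<Rightarrow> (nat \<times> bool) graph" where
  "ladder n = ({1..n} \<times> UNIV,
     {{(i, False), (i, True)} | i. 1 \<le> i \<and> i \<le> n} \<union>
     {{(i, b), (i + 1, b)} | i b. 1 \<le> i \<and> i < n})"

definition copies :: "nat \<Rightarrow> 'a graph \<Rightarrow> (nat \<times> 'a) graph" where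
  "copies m G = ({..<m} \<times> verts G,
     {(\<lambda>x. (j, x)) ` e | j e. j < m \<and> e \<in> edges G})"

end

(*
  Every 4-cycle of m L_n is one of the unit squares u_i v_i v_(i+1) u_(i+1) of some copy, and
  every edge lies on such a square; so it suffices to give all squares the same weight.
  Number the positions (copy j, rung i) by k = m (i - 1) + j, which runs through 0, ..., mn - 1;
  passing from rung i to rung i + 1 of a copy adds m to k. Label u-vertices 1 + k, v-vertices
  2mn - k, the u-rails and the v-rails by two further blocks increasing with k, and the rungs by
  the last block decreasing with k. In the square at position k the u-labels sum to 2 + 2k + m
  and the v-labels to 4mn - 2k - m, the rails contribute + 2k and the rungs - 2k - m, so every
  square has weight 14mn + 5m(n - 1) + 4 - m.
*)

theory Submission
  imports Defs
begin

definition graph_map :: "('b \<Rightarrow> 'a) \<Rightarrow> 'b graph \<Rightarrow> 'a graph" where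
  "graph_map g H = (g ` verts H, (`) g ` edges H)"

lemma verts_graph_map [simp]: "verts (graph_map g H) = g ` verts H"
  by (simp add: graph_map_def verts_def)

lemma edges_graph_map [simp]: "edges (graph_map g H) = (`) g ` edges H"
  by (simp add: graph_map_def edges_def)

lemma graph_eqI: "verts G = verts G' \<Longrightarrow> edges G = edges G' \<Longrightarrow> G = G'"
  by (simp add: verts_def edges_def prod_eq_iff)

lemma simple_graph_edgeE:
  assumes "simple_graph G" "e \<in> edges G"
  obtains x y where "x \<in> verts G" "y \<in> verts G" "x \<noteq> y" "e = {x, y}"
  using assms unfolding simple_graph_def by blast

lemma simple_graph_subgraph:
  assumes "simple_graph G" "is_subgraph G' G"
  shows "simple_graph G'"
  unfolding simple_graph_def
proof
  show "finite (verts G')"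
    using assms finite_subset unfolding simple_graph_def is_subgraph_def by blast
  show "\<forall>e\<in>edges G'. \<exists>x y. x \<in> verts G' \<and> y \<in> verts G' \<and> x \<noteq> y \<and> e = {x, y}"
  proof
    fix e assume "e \<in> edges G'"
    with assms(2) have "e \<in> edges G" "e \<subseteq> verts G'" unfolding is_subgraph_def by auto
    moreover obtain x y where "x \<noteq> y" "e = {x, y}"
      using assms(1) \<open>e \<in> edges G\<close> by (auto elim: simple_graph_edgeE)
    ultimately show "\<exists>x y. x \<in> verts G' \<and> y \<in> verts G' \<and> x \<noteq> y \<and> e = {x, y}"
      by blast
  qed
qed

lemma graph_iso_graph_map:
  assumes inj: "inj_on g (verts H)" and "simple_graph H"
  shows "graph_iso (graph_map g H) H"
  unfolding graph_iso_def
proof (intro exI conjI ballI)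
  let ?f = "inv_into (verts H) g"
  show "bij_betw ?f (verts (graph_map g H)) (verts H)"
    using bij_betw_inv_into[OF inj_on_imp_bij_betw[OF inj]] by simp
  fix x y assume "x \<in> verts (graph_map g H)" "y \<in> verts (graph_map g H)"
  then obtain p q where p: "p \<in> verts H" "x = g p" and q: "q \<in> verts H" "y = g q" by auto
  have "{g p, g q} \<in> (`) g ` edges H \<longleftrightarrow> {p, q} \<in> edges H"
  proof
    assume "{g p, g q} \<in> (`) g ` edges H"
    then obtain e where e: "e \<in> edges H" "g ` {p, q} = g ` e" by auto
    moreover have "e \<subseteq> verts H" using \<open>simple_graph H\<close> e(1) by (auto elim: simple_graph_edgeE)
    ultimately have "{p, q} = e" using inj_on_image_eq_iff[OF inj, of "{p, q}" e] p q by simp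
    with e(1) show "{p, q} \<in> edges H" by simp
  next
    assume "{p, q} \<in> edges H"
    then show "{g p, g q} \<in> (`) g ` edges H" by (rule image_eqI[rotated]) simp
  qed
  then show "{x, y} \<in> edges (graph_map g H) \<longleftrightarrow> {?f x, ?f y} \<in> edges H"
    using p q inj by simp
qed

lemma graph_iso_imp_graph_map:
  assumes "graph_iso G H" "simple_graph G" "simple_graph H"
  obtains g where "inj_on g (verts H)" "G = graph_map g H"
proof -
  obtain f where f: "bij_betw f (verts G) (verts H)"
    and adj: "\<forall>x\<in>verts G. \<forall>y\<in>verts G. {x, y} \<in> edges G \<longleftrightarrow> {f x, f y} \<in> edges H"
    using assms(1) unfolding graph_iso_def by blast
  define g where "g = inv_into (verts G) f"
  have g: "bij_betw g (verts H) (verts G)" unfolding g_def by (rule bij_betw_inv_into[OF f])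
  have gf: "g (f x) = x" if "x \<in> verts G" for x
    using f that unfolding g_def by (simp add: bij_betw_def)
  have fg: "f (g p) = p" if "p \<in> verts H" for p
    using f that unfolding g_def by (simp add: bij_betw_def f_inv_into_f)
  have "edges G = (`) g ` edges H"
  proof (intro equalityI subsetI)
    fix e assume "e \<in> edges G"
    then obtain x y where xy: "x \<in> verts G" "y \<in> verts G" "e = {x, y}"
      using assms(2) by (auto elim: simple_graph_edgeE)
    with \<open>e \<in> edges G\<close> adj have "{f x, f y} \<in> edges H" by blast
    moreover have "e = g ` {f x, f y}" using xy gf by simp
    ultimately show "e \<in> (`) g ` edges H" by blast
  next
    fix e assume "e \<in> (`) g ` edges H"
    then obtain e' where "e' \<in> edges H" "e = g ` e'" by blast
    moreover obtain p q where pq: "p \<in> verts H" "q \<in> verts H" "e' = {p, q}"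
      using assms(3) \<open>e' \<in> edges H\<close> by (auto elim: simple_graph_edgeE)
    moreover have "g p \<in> verts G" "g q \<in> verts G" using g pq by (auto dest: bij_betw_apply)
    ultimately show "e \<in> edges G" using adj fg by auto
  qed
  moreover have "verts G = g ` verts H" using g by (simp add: bij_betw_def)
  ultimately show thesis
    using g by (intro that[of g]) (auto simp: bij_betw_def intro: graph_eqI)
qed

lemma simple_graph_cycle_graph:
  assumes "2 \<le> k"
  shows "simple_graph (cycle_graph k)"
  unfolding simple_graph_def
proof (intro conjI ballI)
  show "finite (verts (cycle_graph k))" by (simp add: cycle_graph_def verts_def)
  fix e assume "e \<in> edges (cycle_graph k)"
  then obtain i where "i < k" "e = {i, (i + 1) mod k}" by (auto simp: cycle_graph_def edges_def)
  moreover have "i \<noteq> (i + 1) mod k"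
    using \<open>i < k\<close> assms by (cases "i + 1 = k") auto
  ultimately show "\<exists>x y. x \<in> verts (cycle_graph k) \<and> y \<in> verts (cycle_graph k) \<and> x \<noteq> y \<and> e = {x, y}"
    using assms by (intro exI[of _ i] exI[of _ "(i + 1) mod k"]) (simp add: cycle_graph_def verts_def)
qed

lemma verts_cycle_graph: "verts (cycle_graph k) = {0..<k}"
  by (simp add: cycle_graph_def verts_def)

lemma edges_cycle_graph_4: "edges (cycle_graph 4) = {{0, 1}, {1, 2}, {2, 3}, {3, 0}}"
proof -
  have "{..<4::nat} = {0, 1, 2, 3}" by auto
  moreover have "edges (cycle_graph 4) = (\<lambda>i. {i, (i + 1) mod 4}) ` {..<4}"
    by (auto simp: cycle_graph_def edges_def)
  moreover have "(0 + 1) mod 4 = (1::nat)" "(1 + 1) mod 4 = (2::nat)" "(2 + 1) mod 4 = (3::nat)"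
    "(3 + 1) mod 4 = (0::nat)" by simp_all
  ultimately show ?thesis by (simp only: image_insert image_empty)
qed

definition cycle4 :: "'a \<Rightarrow> 'a \<Rightarrow> 'a \<Rightarrow> 'a \<Rightarrow> 'a graph" where
  "cycle4 a b c d = ({a, b, c, d}, {{a, b}, {b, c}, {c, d}, {d, a}})"

lemma verts_cycle4 [simp]: "verts (cycle4 a b c d) = {a, b, c, d}"
  by (simp add: cycle4_def verts_def)

lemma edges_cycle4 [simp]: "edges (cycle4 a b c d) = {{a, b}, {b, c}, {c, d}, {d, a}}"
  by (simp add: cycle4_def edges_def)

lemma cycle4_rotate: "cycle4 a b c d = cycle4 b c d a"
  unfolding cycle4_def by auto

lemma graph_map_cycle_graph_4: "graph_map g (cycle_graph 4) = cycle4 (g 0) (g 1) (g 2) (g 3)"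
proof (rule graph_eqI)
  have "{0..<4::nat} = {0, 1, 2, 3}" by auto
  then show "verts (graph_map g (cycle_graph 4)) = verts (cycle4 (g 0) (g 1) (g 2) (g 3))"
    by (simp add: verts_cycle_graph)
qed (simp add: edges_cycle_graph_4)

lemma C4_subgraph_iff:
  assumes "simple_graph G"
  shows "G' \<in> H_subgraphs (cycle_graph 4) G \<longleftrightarrow>
    (\<exists>a b c d. distinct [a, b, c, d] \<and> {{a, b}, {b, c}, {c, d}, {d, a}} \<subseteq> edges G \<and>
       G' = cycle4 a b c d)"
proof
  assume "G' \<in> H_subgraphs (cycle_graph 4) G"
  then have sub: "is_subgraph G' G" and iso: "graph_iso G' (cycle_graph 4)"
    unfolding H_subgraphs_def by auto
  obtain g where "inj_on g (verts (cycle_graph 4))" "G' = graph_map g (cycle_graph 4)"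
    using graph_iso_imp_graph_map[OF iso simple_graph_subgraph[OF assms sub] simple_graph_cycle_graph]
    by auto
  then have "distinct [g 0, g 1, g 2, g 3]" "G' = cycle4 (g 0) (g 1) (g 2) (g 3)"
    by (simp_all add: graph_map_cycle_graph_4 verts_cycle_graph inj_on_eq_iff)
  with sub show "\<exists>a b c d. distinct [a, b, c, d] \<and> {{a, b}, {b, c}, {c, d}, {d, a}} \<subseteq> edges G \<and>
       G' = cycle4 a b c d"
    unfolding is_subgraph_def by auto
next
  assume "\<exists>a b c d. distinct [a, b, c, d] \<and> {{a, b}, {b, c}, {c, d}, {d, a}} \<subseteq> edges G \<and>
       G' = cycle4 a b c d"
  then obtain a b c d where dist: "distinct [a, b, c, d]"
    and E: "{{a, b}, {b, c}, {c, d}, {d, a}} \<subseteq> edges G" and G': "G' = cycle4 a b c d"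
    by blast
  have "e \<subseteq> verts G" if "e \<in> edges G" for e
    using assms that by (auto elim: simple_graph_edgeE)
  with E have "is_subgraph G' G" unfolding G' is_subgraph_def by auto
  moreover have "graph_iso G' (cycle_graph 4)"
  proof -
    have "G' = graph_map ((!) [a, b, c, d]) (cycle_graph 4)"
      unfolding G' graph_map_cycle_graph_4 by simp
    moreover have "inj_on ((!) [a, b, c, d]) (verts (cycle_graph 4))"
      using dist by (intro inj_on_nth) (auto simp: verts_cycle_graph)
    ultimately show ?thesis
      using graph_iso_graph_map[of _ "cycle_graph 4"] simple_graph_cycle_graph[of 4] by simp
  qed
  ultimately show "G' \<in> H_subgraphs (cycle_graph 4) G"
    unfolding H_subgraphs_def by blast
qed

lemma weight_cycle4:
  assumes "distinct [a, b, c, d]"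
  shows "weight f (cycle4 a b c d) = f (Inl a) + f (Inl b) + f (Inl c) + f (Inl d) +
    (f (Inr {a, b}) + f (Inr {b, c}) + f (Inr {c, d}) + f (Inr {d, a}))"
proof -
  have "{a, b} \<noteq> {b, c}" "{a, b} \<noteq> {c, d}" "{a, b} \<noteq> {d, a}" "{b, c} \<noteq> {c, d}"
    "{b, c} \<noteq> {d, a}" "{c, d} \<noteq> {d, a}"
    using assms by (auto simp: doubleton_eq_iff)
  with assms show ?thesis by (simp add: weight_def add.assoc)
qed

lemma simple_graph_copies:
  assumes "simple_graph G"
  shows "simple_graph (copies m G)"
  unfolding simple_graph_def
proof (intro conjI ballI)
  show "finite (verts (copies m G))"
    using assms by (simp add: copies_def verts_def simple_graph_def)
  fix e assume "e \<in> edges (copies m G)"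
  then obtain j e' where "j < m" "e' \<in> edges G" "e = (\<lambda>x. (j, x)) ` e'"
    by (auto simp: copies_def edges_def)
  moreover obtain x y where "x \<in> verts G" "y \<in> verts G" "x \<noteq> y" "e' = {x, y}"
    using assms \<open>e' \<in> edges G\<close> by (auto elim: simple_graph_edgeE)
  ultimately show "\<exists>x y. x \<in> verts (copies m G) \<and> y \<in> verts (copies m G) \<and> x \<noteq> y \<and> e = {x, y}"
    by (intro exI[of _ "(j, x)"] exI[of _ "(j, y)"]) (simp add: copies_def verts_def)
qed

lemma simple_graph_ladder: "simple_graph (ladder n)"
  unfolding simple_graph_def
proof (intro conjI ballI)
  show "finite (verts (ladder n))" by (simp add: ladder_def verts_def)
  fix e assume "e \<in> edges (ladder n)"
  then consider (rung) i where "1 \<le> i" "i \<le> n" "e = {(i, False), (i, True)}"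
    | (rail) i b where "1 \<le> i" "i < n" "e = {(i, b), (i + 1, b)}"
    unfolding ladder_def edges_def by auto
  then show "\<exists>x y. x \<in> verts (ladder n) \<and> y \<in> verts (ladder n) \<and> x \<noteq> y \<and> e = {x, y}"
  proof cases
    case rung
    then show ?thesis by (intro exI[of _ "(i, False)"] exI[of _ "(i, True)"]) (simp add: ladder_def verts_def)
  next
    case rail
    then show ?thesis by (intro exI[of _ "(i, b)"] exI[of _ "(i + 1, b)"]) (simp add: ladder_def verts_def)
  qed
qed

definition rung :: "nat \<Rightarrow> nat \<Rightarrow> (nat \<times> nat \<times> bool) set" where
  "rung j i = {(j, i, False), (j, i, True)}"

definition rail :: "nat \<Rightarrow> nat \<Rightarrow> bool \<Rightarrow> (nat \<times> nat \<times> bool) set" where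
  "rail j i b = {(j, i, b), (j, Suc i, b)}"

lemma rung_eq_iff: "rung j i = rung j' i' \<longleftrightarrow> j = j' \<and> i = i'"
  by (auto simp: rung_def doubleton_eq_iff)

lemma rail_eq_iff: "rail j i b = rail j' i' b' \<longleftrightarrow> j = j' \<and> i = i' \<and> b = b'"
  by (auto simp: rail_def doubleton_eq_iff)

lemma verts_copies_ladder: "verts (copies m (ladder n)) = {..<m} \<times> {1..n} \<times> UNIV"
  by (simp add: copies_def ladder_def verts_def)

lemma edges_copies_ladder:
  "edges (copies m (ladder n)) =
     (\<lambda>(j, i). rung j i) ` ({..<m} \<times> {1..n}) \<union>
     (\<lambda>(j, i). rail j i False) ` ({..<m} \<times> {1..<n}) \<union>
     (\<lambda>(j, i). rail j i True) ` ({..<m} \<times> {1..<n})"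
  (is "_ = ?R")
proof (intro equalityI subsetI)
  fix e assume "e \<in> edges (copies m (ladder n))"
  then obtain j e' where j: "j < m" and "e' \<in> edges (ladder n)" and e: "e = (\<lambda>x. (j, x)) ` e'"
    by (auto simp: copies_def edges_def)
  then consider i where "1 \<le> i" "i \<le> n" "e = rung j i"
    | i b where "1 \<le> i" "i < n" "e = rail j i b"
    by (auto simp: ladder_def edges_def rung_def rail_def)
  then show "e \<in> ?R"
  proof cases
    case 1
    with j show ?thesis by auto
  next
    case 2
    with j show ?thesis by (cases b) auto
  qed
next
  have copy: "(\<lambda>x. (j, x)) ` e \<in> edges (copies m (ladder n))" if "j < m" "e \<in> edges (ladder n)" for j e
    using that by (auto simp: copies_def edges_def)
  fix e assume "e \<in> ?R"
  then consider j i where "j < m" "1 \<le> i" "i \<le> n" "e = rung j i"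
    | j i b where "j < m" "1 \<le> i" "i < n" "e = rail j i b"
    by auto
  then show "e \<in> edges (copies m (ladder n))"
  proof cases
    case 1
    then have "{(i, False), (i, True)} \<in> edges (ladder n)" by (auto simp: ladder_def edges_def)
    from copy[OF \<open>j < m\<close> this] show ?thesis using 1 by (simp add: rung_def)
  next
    case 2
    then have "{(i, b), (i + 1, b)} \<in> edges (ladder n)" by (auto simp: ladder_def edges_def)
    from copy[OF \<open>j < m\<close> this] show ?thesis using 2 by (simp add: rail_def)
  qed
qed

lemma edges_copies_ladderE:
  assumes "e \<in> edges (copies m (ladder n))"
  obtains (rung) j i where "j < m" "1 \<le> i" "i \<le> n" "e = rung j i"
    | (rail) j i b where "j < m" "1 \<le> i" "i < n" "e = rail j i b"
  using assms unfolding edges_copies_ladder by auto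

lemma edge_copies_ladderD:
  assumes "{(j, i, b), (j', i', b')} \<in> edges (copies m (ladder n))"
  shows "j' = j \<and> j < m \<and> 1 \<le> i \<and> i \<le> n \<and> 1 \<le> i' \<and> i' \<le> n \<and>
    (i' = i \<and> b' \<noteq> b \<or> b' = b \<and> (i' = Suc i \<or> i = Suc i'))"
  using assms
  by (cases rule: edges_copies_ladderE) (auto simp: rung_def rail_def doubleton_eq_iff)

lemma rung_in_edges_copies_ladder:
  "j < m \<Longrightarrow> 1 \<le> i \<Longrightarrow> i \<le> n \<Longrightarrow> rung j i \<in> edges (copies m (ladder n))"
  unfolding edges_copies_ladder by (intro UnI1 rev_image_eqI[of "(j, i)"]) auto

lemma rail_in_edges_copies_ladder:
  "j < m \<Longrightarrow> 1 \<le> i \<Longrightarrow> i < n \<Longrightarrow> rail j i b \<in> edges (copies m (ladder n))"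
  unfolding edges_copies_ladder by (cases b) (auto intro: rev_image_eqI[of "(j, i)"])

definition square :: "nat \<Rightarrow> nat \<Rightarrow> (nat \<times> nat \<times> bool) graph" where
  "square j i = cycle4 (j, i, False) (j, i, True) (j, Suc i, True) (j, Suc i, False)"

lemma edges_square: "edges (square j i) = {rung j i, rail j i True, rung j (Suc i), rail j i False}"
  by (auto simp: square_def rung_def rail_def)

lemma cycle4_eq_square: "cycle4 (j, i, b) (j, i, \<not> b) (j, Suc i, \<not> b) (j, Suc i, b) = square j i"
  by (cases b) (auto simp: square_def cycle4_def insert_commute)

lemma cycle4_Suc_eq_square: "cycle4 (j, Suc i, b) (j, Suc i, \<not> b) (j, i, \<not> b) (j, i, b) = square j i"
  by (cases b) (auto simp: square_def cycle4_def insert_commute)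

lemma ladder_4cycle_shape:
  fixes i0 i1 i2 i3 :: nat
  assumes "i1 = i0 \<and> b1 \<noteq> b0 \<or> b1 = b0 \<and> (i1 = Suc i0 \<or> i0 = Suc i1)"
    "i2 = i1 \<and> b2 \<noteq> b1 \<or> b2 = b1 \<and> (i2 = Suc i1 \<or> i1 = Suc i2)"
    "i3 = i2 \<and> b3 \<noteq> b2 \<or> b3 = b2 \<and> (i3 = Suc i2 \<or> i2 = Suc i3)"
    "i0 = i3 \<and> b0 \<noteq> b3 \<or> b0 = b3 \<and> (i0 = Suc i3 \<or> i3 = Suc i0)"
    "distinct [(i0, b0), (i1, b1), (i2, b2), (i3, b3)]"
  shows "i1 = i0 \<and> b1 = (\<not> b0) \<and> b2 = (\<not> b0) \<and> i3 = i2 \<and> b3 = b0 \<and> (i2 = Suc i0 \<or> i0 = Suc i2) \<or>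
    b1 = b0 \<and> i2 = i1 \<and> b2 = (\<not> b0) \<and> i3 = i0 \<and> b3 = (\<not> b0) \<and> (i1 = Suc i0 \<or> i0 = Suc i1)"
  using assms by (cases b0; cases b1; cases b2; cases b3) auto

lemma cycle4_copies_ladder_eq_square:
  assumes "distinct [(j0, i0, b0), (j1, i1, b1), (j2, i2, b2), (j3, i3, b3)]"
    and "{{(j0, i0, b0), (j1, i1, b1)}, {(j1, i1, b1), (j2, i2, b2)},
          {(j2, i2, b2), (j3, i3, b3)}, {(j3, i3, b3), (j0, i0, b0)}} \<subseteq> edges (copies m (ladder n))"
  shows "\<exists>j i. j < m \<and> 1 \<le> i \<and> i < n \<and>
    cycle4 (j0, i0, b0) (j1, i1, b1) (j2, i2, b2) (j3, i3, b3) = square j i"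
proof -
  from assms(2) have
    "{(j0, i0, b0), (j1, i1, b1)} \<in> edges (copies m (ladder n))"
    "{(j1, i1, b1), (j2, i2, b2)} \<in> edges (copies m (ladder n))"
    "{(j2, i2, b2), (j3, i3, b3)} \<in> edges (copies m (ladder n))"
    "{(j3, i3, b3), (j0, i0, b0)} \<in> edges (copies m (ladder n))"
    by auto
  note adj = this[THEN edge_copies_ladderD]
  have j: "j1 = j0" "j2 = j0" "j3 = j0" "j0 < m"
    and bounds: "1 \<le> i0" "i0 \<le> n" "1 \<le> i1" "i1 \<le> n" "1 \<le> i2" "i2 \<le> n"
    using adj by auto
  have "distinct [(i0, b0), (i1, b1), (i2, b2), (i3, b3)]" using assms(1) j by auto
  then have "i1 = i0 \<and> b1 = (\<not> b0) \<and> b2 = (\<not> b0) \<and> i3 = i2 \<and> b3 = b0 \<and> (i2 = Suc i0 \<or> i0 = Suc i2) \<or>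
    b1 = b0 \<and> i2 = i1 \<and> b2 = (\<not> b0) \<and> i3 = i0 \<and> b3 = (\<not> b0) \<and> (i1 = Suc i0 \<or> i0 = Suc i1)"
    using adj by (intro ladder_4cycle_shape) auto
  then consider (rung_first)
      "i1 = i0" "b1 = (\<not> b0)" "b2 = (\<not> b0)" "i3 = i2" "b3 = b0" "i2 = Suc i0 \<or> i0 = Suc i2"
    | (rail_first) "b1 = b0" "i2 = i1" "b2 = (\<not> b0)" "i3 = i0" "b3 = (\<not> b0)" "i1 = Suc i0 \<or> i0 = Suc i1"
    by blast
  then show ?thesis
  proof cases
    case rung_first
    then have eq: "cycle4 (j0, i0, b0) (j1, i1, b1) (j2, i2, b2) (j3, i3, b3) =
        cycle4 (j0, i0, b0) (j0, i0, \<not> b0) (j0, i2, \<not> b0) (j0, i2, b0)"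
      using j by simp
    from rung_first consider "i2 = Suc i0" | "i0 = Suc i2" by blast
    then show ?thesis
    proof cases
      case 1
      with j bounds show ?thesis
        unfolding eq using cycle4_eq_square[of j0 i0 b0] by (metis Suc_le_lessD)
    next
      case 2
      with j bounds show ?thesis
        unfolding eq using cycle4_Suc_eq_square[of j0 i2 b0] by (metis Suc_le_lessD)
    qed
  next
    case rail_first
    then have eq: "cycle4 (j0, i0, b0) (j1, i1, b1) (j2, i2, b2) (j3, i3, b3) =
        cycle4 (j0, i1, b0) (j0, i1, \<not> b0) (j0, i0, \<not> b0) (j0, i0, b0)"
      using j cycle4_rotate by simp
    from rail_first consider "i0 = Suc i1" | "i1 = Suc i0" by blast
    then show ?thesis
    proof cases
      case 1
      with j bounds show ?thesis
        unfolding eq using cycle4_eq_square[of j0 i1 b0] by (metis Suc_le_lessD)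
    next
      case 2
      with j bounds show ?thesis
        unfolding eq using cycle4_Suc_eq_square[of j0 i0 b0] by (metis Suc_le_lessD)
    qed
  qed
qed

lemma C4_subgraphs_copies_ladder:
  "H_subgraphs (cycle_graph 4) (copies m (ladder n)) = {square j i | j i. j < m \<and> 1 \<le> i \<and> i < n}"
proof (intro equalityI subsetI; unfold C4_subgraph_iff[OF simple_graph_copies[OF simple_graph_ladder]])
  fix G' assume "\<exists>a b c d. distinct [a, b, c, d] \<and>
    {{a, b}, {b, c}, {c, d}, {d, a}} \<subseteq> edges (copies m (ladder n)) \<and> G' = cycle4 a b c d"
  then obtain x0 x1 x2 x3 where dist: "distinct [x0, x1, x2, x3]"
    and E: "{{x0, x1}, {x1, x2}, {x2, x3}, {x3, x0}} \<subseteq> edges (copies m (ladder n))"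
    and G': "G' = cycle4 x0 x1 x2 x3"
    by blast
  obtain j0 i0 b0 j1 i1 b1 j2 i2 b2 j3 i3 b3 where
    x: "x0 = (j0, i0, b0)" "x1 = (j1, i1, b1)" "x2 = (j2, i2, b2)" "x3 = (j3, i3, b3)"
    by (metis prod_cases3)
  have "\<exists>j i. j < m \<and> 1 \<le> i \<and> i < n \<and> cycle4 x0 x1 x2 x3 = square j i"
    unfolding x by (rule cycle4_copies_ladder_eq_square[OF dist[unfolded x] E[unfolded x]])
  then show "G' \<in> {square j i | j i. j < m \<and> 1 \<le> i \<and> i < n}"
    unfolding G' by blast
next
  fix G' assume "G' \<in> {square j i | j i. j < m \<and> 1 \<le> i \<and> i < n}"
  then obtain j i where ji: "j < m" "1 \<le> i" "i < n" and G': "G' = square j i" by blast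
  have "rung j i \<in> edges (copies m (ladder n))" "rail j i True \<in> edges (copies m (ladder n))"
    "rung j (Suc i) \<in> edges (copies m (ladder n))" "rail j i False \<in> edges (copies m (ladder n))"
    using ji rung_in_edges_copies_ladder rail_in_edges_copies_ladder by simp_all
  then have "{{(j, i, False), (j, i, True)}, {(j, i, True), (j, Suc i, True)},
      {(j, Suc i, True), (j, Suc i, False)}, {(j, Suc i, False), (j, i, False)}}
      \<subseteq> edges (copies m (ladder n))"
    by (simp add: rung_def rail_def insert_commute)
  moreover have "distinct [(j, i, False), (j, i, True), (j, Suc i, True), (j, Suc i, False)]" by simp
  ultimately show "\<exists>a b c d. distinct [a, b, c, d] \<and>
    {{a, b}, {b, c}, {c, d}, {d, a}} \<subseteq> edges (copies m (ladder n)) \<and> G' = cycle4 a b c d"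
    unfolding G' square_def by blast
qed

lemma H_covering_C4_copies_ladder:
  assumes "2 \<le> n"
  shows "H_covering (cycle_graph 4) (copies m (ladder n))"
  unfolding H_covering_def C4_subgraphs_copies_ladder
proof
  fix e assume "e \<in> edges (copies m (ladder n))"
  then obtain j i where "j < m" "1 \<le> i" "i < n" "e \<in> edges (square j i)"
  proof (cases rule: edges_copies_ladderE)
    case (rung j i)
    show ?thesis
    proof (cases "i < n")
      case True
      with rung that show ?thesis by (simp add: edges_square)
    next
      case False
      with rung assms have "e \<in> edges (square j (n - 1))" by (simp add: edges_square)
      moreover have "1 \<le> n - 1" "n - 1 < n" using assms by simp_all
      ultimately show ?thesis using rung that by blast
    qed
  next
    case (rail j i b)
    with that show ?thesis by (cases b) (simp_all add: edges_square)
  qed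
  then show "\<exists>G'\<in>{square j i | j i. j < m \<and> 1 \<le> i \<and> i < n}. e \<in> edges G'" by blast
qed

lemma bij_betw_image_reindex:
  assumes "inj_on g P" "bij_betw p P K" "bij_betw h K B" "\<And>x. x \<in> P \<Longrightarrow> f (g x) = h (p x)"
  shows "bij_betw f (g ` P) B"
proof -
  have "bij_betw (f \<circ> g) P B \<longleftrightarrow> bij_betw (h \<circ> p) P B"
    by (rule bij_betw_cong) (simp add: assms(4))
  with bij_betw_trans[OF assms(2,3)] have "bij_betw (f \<circ> g) P B" by simp
  then show ?thesis
    using bij_betw_comp_iff[OF inj_on_imp_bij_betw[OF assms(1)]] by blast
qed

lemma bij_betw_plus_lessThan: "bij_betw (\<lambda>k. a + k) {..<N} {a..<a + N :: nat}"
  by (rule bij_betw_byWitness[where f' = "\<lambda>k. k - a"]) auto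

lemma bij_betw_minus_lessThan:
  assumes "N \<le> a"
  shows "bij_betw (\<lambda>k. a - k) {..<N} {a - N<..a :: nat}"
  by (rule bij_betw_byWitness[where f' = "\<lambda>k. a - k"]) (use assms in auto)

lemma bij_betw_Inl_Un_Inr:
  assumes "bij_betw (\<lambda>v. f (Inl v)) V A" "bij_betw (\<lambda>e. f (Inr e)) E B" "A \<inter> B = {}"
  shows "bij_betw f (Inl ` V \<union> Inr ` E) (A \<union> B)"
proof (rule bij_betw_combine[OF _ _ assms(3)])
  show "bij_betw f (Inl ` V) A"
    by (rule bij_betw_image_reindex[OF _ assms(1) bij_betw_id]) (simp_all add: inj_on_def)
  show "bij_betw f (Inr ` E) B"
    by (rule bij_betw_image_reindex[OF _ assms(2) bij_betw_id]) (simp_all add: inj_on_def)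
qed

definition rung_index :: "nat \<Rightarrow> nat \<Rightarrow> nat \<Rightarrow> nat" where
  "rung_index m j i = m * (i - 1) + j"

lemma rung_index_Suc: "1 \<le> i \<Longrightarrow> rung_index m j (Suc i) = rung_index m j i + m"
  by (cases i) (simp_all add: rung_index_def)

lemma rung_index_less:
  assumes "j < m" "1 \<le> i" "i \<le> q"
  shows "rung_index m j i < m * q"
proof -
  have "m * (i - 1) + j < m * (i - 1) + m" using assms by simp
  also have "\<dots> = m * i" using assms by (cases i) auto
  also have "\<dots> \<le> m * q" using assms by simp
  finally show ?thesis unfolding rung_index_def .
qed

lemma bij_betw_rung_index:
  "bij_betw (\<lambda>(j, i). rung_index m j i) ({..<m} \<times> {1..q}) {..<m * q}"
proof (rule bij_betw_byWitness[where f' = "\<lambda>k. (k mod m, k div m + 1)"]; intro ballI subsetI)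
  fix a assume "a \<in> {..<m} \<times> {1..q}"
  then obtain j i where "a = (j, i)" "j < m" "1 \<le> i" "i \<le> q" by auto
  then show "(\<lambda>k. (k mod m, k div m + 1)) ((\<lambda>(j, i). rung_index m j i) a) = a"
    by (simp add: rung_index_def)
next
  fix k assume "k \<in> {..<m * q}"
  then have "0 < m" by (cases "m = 0") auto
  then show "(\<lambda>(j, i). rung_index m j i) ((\<lambda>k. (k mod m, k div m + 1)) k) = k"
    by (simp add: rung_index_def)
next
  fix k assume "k \<in> (\<lambda>(j, i). rung_index m j i) ` ({..<m} \<times> {1..q})"
  then show "k \<in> {..<m * q}" using rung_index_less by auto
next
  fix x assume "x \<in> (\<lambda>k. (k mod m, k div m + 1)) ` {..<m * q}"
  then obtain k where "k < m * q" "x = (k mod m, k div m + 1)" by blast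
  moreover from \<open>k < m * q\<close> have "0 < m" by (cases "m = 0") auto
  moreover from \<open>k < m * q\<close> have "k div m < q" by (simp add: less_mult_imp_div_less mult.commute)
  ultimately show "x \<in> {..<m} \<times> {1..q}" by simp
qed

text \<open>
  An edge is classified by its endpoints: a rung has a single rung number i, a u-rail has only
  endpoints of the form (j, i, False).
\<close>
definition ladder_labeling ::
    "nat \<Rightarrow> nat \<Rightarrow> (nat \<times> nat \<times> bool) + (nat \<times> nat \<times> bool) set \<Rightarrow> nat" where
  "ladder_labeling m n x = (case x of
     Inl (j, i, b) \<Rightarrow> if b then 2 * (m * n) - rung_index m j i else 1 + rung_index m j i
   | Inr e \<Rightarrow>
       (let j = Min (fst ` e); I = (\<lambda>v. fst (snd v)) ` e; k = rung_index m j (Min I) in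
        if card I = 1 then 3 * (m * n) + 2 * (m * (n - 1)) - k
        else if (\<lambda>v. snd (snd v)) ` e = {False} then 2 * (m * n) + 1 + k
        else 2 * (m * n) + m * (n - 1) + 1 + k))"

lemma ladder_labeling_Inl_False: "ladder_labeling m n (Inl (j, i, False)) = 1 + rung_index m j i"
  by (simp add: ladder_labeling_def)

lemma ladder_labeling_Inl_True:
  "ladder_labeling m n (Inl (j, i, True)) = 2 * (m * n) - rung_index m j i"
  by (simp add: ladder_labeling_def)

lemma ladder_labeling_rung:
  "ladder_labeling m n (Inr (rung j i)) = 3 * (m * n) + 2 * (m * (n - 1)) - rung_index m j i"
  by (simp add: ladder_labeling_def rung_def Let_def)

lemma ladder_labeling_rail_False:
  "ladder_labeling m n (Inr (rail j i False)) = (2 * (m * n) + 1) + rung_index m j i"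
  by (simp add: ladder_labeling_def rail_def Let_def)

lemma ladder_labeling_rail_True:
  "ladder_labeling m n (Inr (rail j i True)) = (2 * (m * n) + m * (n - 1) + 1) + rung_index m j i"
  by (simp add: ladder_labeling_def rail_def Let_def)

lemma bij_betw_ladder_labeling_verts:
  "bij_betw (\<lambda>v. ladder_labeling m n (Inl v)) (verts (copies m (ladder n))) {1..2 * (m * n)}"
proof -
  let ?P = "{..<m} \<times> {1..n}" and ?lab = "\<lambda>v. ladder_labeling m n (Inl v)"
  have u: "bij_betw ?lab ((\<lambda>(j, i). (j, i, False)) ` ?P) {1..<1 + m * n}"
    by (rule bij_betw_image_reindex[OF _ bij_betw_rung_index bij_betw_plus_lessThan])
      (auto simp: inj_on_def ladder_labeling_Inl_False)
  have v: "bij_betw ?lab ((\<lambda>(j, i). (j, i, True)) ` ?P) {2 * (m * n) - m * n<..2 * (m * n)}"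
    by (rule bij_betw_image_reindex[OF _ bij_betw_rung_index bij_betw_minus_lessThan])
      (auto simp: inj_on_def ladder_labeling_Inl_True)
  have "bij_betw ?lab ((\<lambda>(j, i). (j, i, False)) ` ?P \<union> (\<lambda>(j, i). (j, i, True)) ` ?P)
      ({1..<1 + m * n} \<union> {2 * (m * n) - m * n<..2 * (m * n)})"
    by (rule bij_betw_combine[OF u v]) auto
  moreover have
    "verts (copies m (ladder n)) = (\<lambda>(j, i). (j, i, False)) ` ?P \<union> (\<lambda>(j, i). (j, i, True)) ` ?P"
    unfolding verts_copies_ladder by (auto simp: image_iff)
  moreover have "{1..<1 + m * n} \<union> {2 * (m * n) - m * n<..2 * (m * n)} = {1..2 * (m * n)}" by auto
  ultimately show ?thesis by simp
qed

lemma bij_betw_ladder_labeling_edges: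
  "bij_betw (\<lambda>e. ladder_labeling m n (Inr e)) (edges (copies m (ladder n)))
     {2 * (m * n)<..3 * (m * n) + 2 * (m * (n - 1))}"
proof -
  let ?M = "m * n" and ?N = "m * (n - 1)" and ?lab = "\<lambda>e. ladder_labeling m n (Inr e)"
  let ?P = "{..<m} \<times> {1..n}" and ?Q = "{..<m} \<times> {1..n - 1}"
  have Q: "{1..<n} = {1..n - 1}" by (cases n) auto
  have rungs: "bij_betw ?lab ((\<lambda>(j, i). rung j i) ` ?P) {3 * ?M + 2 * ?N - ?M<..3 * ?M + 2 * ?N}"
    by (rule bij_betw_image_reindex[OF _ bij_betw_rung_index bij_betw_minus_lessThan])
      (auto simp: inj_on_def rung_eq_iff ladder_labeling_rung)
  have rails_u: "bij_betw ?lab ((\<lambda>(j, i). rail j i False) ` ?Q) {2 * ?M + 1..<2 * ?M + 1 + ?N}"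
    by (rule bij_betw_image_reindex[OF _ bij_betw_rung_index bij_betw_plus_lessThan])
      (auto simp: inj_on_def rail_eq_iff ladder_labeling_rail_False)
  have rails_v:
    "bij_betw ?lab ((\<lambda>(j, i). rail j i True) ` ?Q) {2 * ?M + ?N + 1..<2 * ?M + ?N + 1 + ?N}"
    by (rule bij_betw_image_reindex[OF _ bij_betw_rung_index bij_betw_plus_lessThan])
      (auto simp: inj_on_def rail_eq_iff ladder_labeling_rail_True)
  have "bij_betw ?lab
      ((\<lambda>(j, i). rung j i) ` ?P \<union> (\<lambda>(j, i). rail j i False) ` ?Q \<union> (\<lambda>(j, i). rail j i True) ` ?Q)
      ({3 * ?M + 2 * ?N - ?M<..3 * ?M + 2 * ?N} \<union> {2 * ?M + 1..<2 * ?M + 1 + ?N} \<union>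
       {2 * ?M + ?N + 1..<2 * ?M + ?N + 1 + ?N})"
    by (intro bij_betw_combine[OF bij_betw_combine[OF rungs rails_u] rails_v]) auto
  moreover have "{3 * ?M + 2 * ?N - ?M<..3 * ?M + 2 * ?N} \<union> {2 * ?M + 1..<2 * ?M + 1 + ?N} \<union>
       {2 * ?M + ?N + 1..<2 * ?M + ?N + 1 + ?N} = {2 * ?M<..3 * ?M + 2 * ?N}"
    by auto
  ultimately show ?thesis unfolding edges_copies_ladder Q by simp
qed

lemma weight_ladder_labeling_square:
  assumes "j < m" "1 \<le> i" "i < n"
  shows "weight (ladder_labeling m n) (square j i) = 14 * (m * n) + 5 * (m * (n - 1)) + 4 - m"
proof -
  let ?k = "rung_index m j i" and ?M = "m * n" and ?N = "m * (n - 1)"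
  have k: "rung_index m j (Suc i) = ?k + m" using assms(2) by (rule rung_index_Suc)
  have "?k + m < ?M" using rung_index_less[of j m "Suc i" n] assms k by simp
  moreover have "?k < ?N" using rung_index_less[of j m i "n - 1"] assms by simp
  moreover have
    "{(j, i, False), (j, i, True)} = rung j i" "{(j, i, True), (j, Suc i, True)} = rail j i True"
    "{(j, Suc i, True), (j, Suc i, False)} = rung j (Suc i)"
    "{(j, Suc i, False), (j, i, False)} = rail j i False"
    by (auto simp: rung_def rail_def)
  moreover have "weight (ladder_labeling m n) (square j i) =
      ladder_labeling m n (Inl (j, i, False)) + ladder_labeling m n (Inl (j, i, True)) +
      ladder_labeling m n (Inl (j, Suc i, True)) + ladder_labeling m n (Inl (j, Suc i, False)) +
      (ladder_labeling m n (Inr {(j, i, False), (j, i, True)}) +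
       ladder_labeling m n (Inr {(j, i, True), (j, Suc i, True)}) +
       ladder_labeling m n (Inr {(j, Suc i, True), (j, Suc i, False)}) +
       ladder_labeling m n (Inr {(j, Suc i, False), (j, i, False)}))"
    unfolding square_def by (rule weight_cycle4) simp
  ultimately show ?thesis
    by (simp add: k ladder_labeling_Inl_False ladder_labeling_Inl_True
      ladder_labeling_rung ladder_labeling_rail_False ladder_labeling_rail_True)
qed

theorem theorem3:
  fixes m n :: nat
  assumes "m \<ge> 2" and "n \<ge> 2"
  shows "H_supermagic (cycle_graph 4) (copies m (ladder n))"
proof -
  let ?G = "copies m (ladder n)" and ?lab = "ladder_labeling m n"
  let ?V = "{1..2 * (m * n)}" and ?E = "{2 * (m * n)<..3 * (m * n) + 2 * (m * (n - 1))}"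
  note vertex_labels = bij_betw_ladder_labeling_verts[of m n]
    and edge_labels = bij_betw_ladder_labeling_edges[of m n]
  have "bij_betw ?lab (Inl ` verts ?G \<union> Inr ` edges ?G) (?V \<union> ?E)"
    by (rule bij_betw_Inl_Un_Inr[OF vertex_labels edge_labels]) auto
  moreover have "?V \<union> ?E = {1..card (verts ?G) + card (edges ?G)}"
    using bij_betw_same_card[OF vertex_labels] bij_betw_same_card[OF edge_labels] by auto
  moreover have "(\<lambda>v. ?lab (Inl v)) ` verts ?G = {1..card (verts ?G)}"
    using bij_betw_imp_surj_on[OF vertex_labels] bij_betw_same_card[OF vertex_labels] by simp
  moreover have "weight ?lab G' = 14 * (m * n) + 5 * (m * (n - 1)) + 4 - m"
    if "G' \<in> H_subgraphs (cycle_graph 4) ?G" for G'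
    using that weight_ladder_labeling_square unfolding C4_subgraphs_copies_ladder by blast
  ultimately have "H_supermagic_labeling (cycle_graph 4) ?G ?lab"
    unfolding H_supermagic_labeling_def H_magic_labeling_def by auto
  then show ?thesis
    unfolding H_supermagic_def
    using simple_graph_copies[OF simple_graph_ladder] H_covering_C4_copies_ladder assms(2) by blast
qed

end
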